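(* Assume $a_1+a_2=1$. Then $$\Pi^2_0(z)=-\frac{n}{2}\,F(z)\,\log\!\Big(q\,\frac{1-a_0z}{z}\Big)=-\frac n2\Big(F(z)\log(1-a_0z)+\tilde G(z)\Big),$$ where $z=z_1$ and $q=z\exp(\tilde G(z)/F(z))$ is $q_1=e^{\Pi^1/\Pi^0}$ restricted to $z_2=0$.
   Context: Let $\theta_i=z_i\,\partial/\partial z_i$. Fix an integer $n\ge1$ and constants $a_0\neq0,a_1,a_2$. Consider the system $L_1=-n\theta_1\theta_2+\theta_1^2-a_0z_1(\theta_1+a_1)(\theta_1+a_2)$, $L_2=\theta_2^{n}-(-1)^n z_2\,(n\theta_2-\theta_1)(n\theta_2-\theta_1+1)\cdots(n\theta_2-\theta_1+n-1)$. Let $\Pi^0$ be the solution holomorphic at $0$ with $\Pi^0(0)=1$ and, for $a=1,2$, $\Pi^a=\Pi^0\log z_a+\sum_{i\ge0}\Pi^a_i(z_1)z_2^i$ solutions, normalized (by adding multiples of $\Pi^0$) so that $\Pi^a_0(0)=0$. Let $F(z)={}_2F_1(a_1,a_2;1;a_0z)$ and $\tilde G(z)=\sum_{k\ge1}\frac{(a_1)_k(a_2)_k}{(k!)^2}\Big[\sum_{j=1}^2\sum_{l=0}^{k-1}\big(\tfrac1{a_j+l}-\tfrac1{1+l}\big)\Big](a_0z)^k$. *)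

theory Defs
  imports "HOL-Analysis.Analysis"
begin

type_synonym cfun2 = "complex \<Rightarrow> complex \<Rightarrow> complex"

definition theta1 :: "cfun2 \<Rightarrow> cfun2" where
  "theta1 f = (\<lambda>z1 z2. z1 * deriv (\<lambda>w. f w z2) z1)"

definition theta2 :: "cfun2 \<Rightarrow> cfun2" where
  "theta2 f = (\<lambda>z1 z2. z2 * deriv (\<lambda>w. f z1 w) z2)"

definition theta1_plus :: "complex \<Rightarrow> cfun2 \<Rightarrow> cfun2" where
  "theta1_plus c f = (\<lambda>z1 z2. theta1 f z1 z2 + c * f z1 z2)"

definition L1 :: "nat \<Rightarrow> complex \<Rightarrow> complex \<Rightarrow> complex \<Rightarrow> cfun2 \<Rightarrow> cfun2" where
  "L1 n a0 a1 a2 f = (\<lambda>z1 z2.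
     - of_nat n * theta1 (theta2 f) z1 z2 + theta1 (theta1 f) z1 z2
     - a0 * z1 * theta1_plus a1 (theta1_plus a2 f) z1 z2)"

definition thetaM :: "nat \<Rightarrow> nat \<Rightarrow> cfun2 \<Rightarrow> cfun2" where
  "thetaM n j f = (\<lambda>z1 z2. of_nat n * theta2 f z1 z2 - theta1 f z1 z2 + of_nat j * f z1 z2)"

text \<open>L2 = theta2^n - (-1)^n z2 (n theta2 - theta1)(n theta2 - theta1 + 1)...(n theta2 - theta1 + n - 1).\<close>
definition L2 :: "nat \<Rightarrow> cfun2 \<Rightarrow> cfun2" where
  "L2 n f = (\<lambda>z1 z2. (theta2 ^^ n) f z1 z2
     - (-1) ^ n * z2 * foldr (thetaM n) [0..<n] f z1 z2)"

text \<open>Holomorphy on the polydisc of radius r (separately in each variable; by Hartogs'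
  theorem this is equivalent to joint holomorphy).\<close>
definition holo_polydisc :: "real \<Rightarrow> cfun2 \<Rightarrow> bool" where
  "holo_polydisc r f \<longleftrightarrow>
     (\<forall>z2\<in>ball 0 r. (\<lambda>w. f w z2) holomorphic_on ball 0 r) \<and>
     (\<forall>z1\<in>ball 0 r. (\<lambda>w. f z1 w) holomorphic_on ball 0 r)"

definition hypF :: "complex \<Rightarrow> complex \<Rightarrow> complex \<Rightarrow> complex \<Rightarrow> complex" where
  "hypF a0 a1 a2 z =
     (\<Sum>k. pochhammer a1 k * pochhammer a2 k / (of_nat (fact k))^2 * (a0 * z) ^ k)"

definition hypGt :: "complex \<Rightarrow> complex \<Rightarrow> complex \<Rightarrow> complex \<Rightarrow> complex" where
  "hypGt a0 a1 a2 z =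
     (\<Sum>k. (if k = 0 then 0 else
        pochhammer a1 k * pochhammer a2 k / (of_nat (fact k))^2 *
        (\<Sum>l<k. (1 / (a1 + of_nat l) - 1 / (1 + of_nat l))
               + (1 / (a2 + of_nat l) - 1 / (1 + of_nat l))) * (a0 * z) ^ k))"

end

theory Submission
  imports Defs "HOL-Complex_Analysis.Complex_Analysis"
begin

text \<open>
  On \<open>z\<^sub>2 = 0\<close> the operator \<open>L\<^sub>1\<close> becomes the hypergeometric operator
  \<open>D = \<theta>\<^sup>2 - a\<^sub>0 z (\<theta> + a\<^sub>1) (\<theta> + a\<^sub>2)\<close>, \<open>\<theta> = z d/dz\<close>. So \<open>f = \<Pi>\<^sup>0(z,0)\<close> solves
  \<open>D f = 0\<close>, and inserting \<open>\<Pi>\<^sup>1 = \<Pi>\<^sup>0 log z\<^sub>1 + H\<^sub>1\<close> shows that \<open>g = H\<^sub>1(z,0)\<close> solves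
  \<open>D g = -2 \<theta> f + a\<^sub>0 z (2 \<theta> f + (a\<^sub>1 + a\<^sub>2) f)\<close>; the Taylor coefficients of \<open>f\<close> and \<open>g\<close>
  are then forced by a first-order recursion, giving \<open>f = hypF\<close> and \<open>g = hypGt\<close>.

  For \<open>\<Pi>\<^sup>2 = \<Pi>\<^sup>0 log z\<^sub>2 + H\<^sub>2\<close> the logarithm is singular along \<open>z\<^sub>2 = 0\<close>, but
  \<open>L\<^sub>1 \<Pi>\<^sup>2 = log z\<^sub>2 L\<^sub>1 \<Pi>\<^sup>0 - n \<theta>\<^sub>1 \<Pi>\<^sup>0 + L\<^sub>1 H\<^sub>2\<close> and the last two terms are holomorphic
  in \<open>z\<^sub>2\<close>; letting \<open>z\<^sub>2 \<rightarrow> 0\<close> gives \<open>D h = n \<theta> f\<close> for \<open>h = H\<^sub>2(z,0)\<close>. Since the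
  functions are only assumed holomorphic in each variable separately, the holomorphy in
  \<open>z\<^sub>2\<close> of their \<open>z\<^sub>1\<close>-derivatives is obtained by Osgood's argument: a Baire category
  bound on a small polydisc and uniform convergence of difference quotients there, followed by
  analytic continuation in \<open>z\<^sub>1\<close>.

  If \<open>a\<^sub>1 + a\<^sub>2 = 1\<close>, then \<open>D (f log(1 - a\<^sub>0 z) + g) = -2 \<theta> f\<close>, so \<open>h + (n/2) (f log(1 - a\<^sub>0 z) + g)\<close>
  solves \<open>D u = 0\<close> with \<open>u(0) = 0\<close> and hence vanishes. The mirror-map form is
  \<open>log (e\<^sup>E w) = E + log w\<close> for the small quantity \<open>E = g/f\<close>.
\<close>

section \<open>The hypergeometric operator\<close>

definition euler_op :: "(complex \<Rightarrow> complex) \<Rightarrow> complex \<Rightarrow> complex" where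
  "euler_op u z = z * deriv u z"

definition hyp_op :: "complex \<Rightarrow> complex \<Rightarrow> complex \<Rightarrow> (complex \<Rightarrow> complex) \<Rightarrow> complex \<Rightarrow> complex" where
  "hyp_op a0 a1 a2 u z = euler_op (euler_op u) z
     - a0 * z * (euler_op (\<lambda>w. euler_op u w + a2 * u w) z + a1 * (euler_op u z + a2 * u z))"

lemma L1_eq_hyp_op:
  "L1 n a0 a1 a2 f z1 z2 = - of_nat n * euler_op (\<lambda>w. theta2 f w z2) z1 + hyp_op a0 a1 a2 (\<lambda>w. f w z2) z1"
  by (simp add: L1_def hyp_op_def euler_op_def[abs_def] theta1_def theta1_plus_def)

lemma L1_at_z2_zero: "L1 n a0 a1 a2 f z 0 = hyp_op a0 a1 a2 (\<lambda>w. f w 0) z"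
  by (simp add: L1_eq_hyp_op euler_op_def theta2_def)

lemma hyp_op_expand:
  assumes "u holomorphic_on S" "open S" "z \<in> S"
  shows "hyp_op a0 a1 a2 u z = z^2 * deriv (deriv u) z + z * deriv u z
     - a0 * z * (z^2 * deriv (deriv u) z + (1 + a1 + a2) * z * deriv u z + a1 * a2 * u z)"
proof -
  have u: "(u has_field_derivative deriv u z) (at z)"
    and du: "(deriv u has_field_derivative deriv (deriv u) z) (at z)"
    using assms by (auto intro!: holomorphic_derivI holomorphic_deriv)
  have "deriv (\<lambda>w. w * deriv u w) z = deriv u z + z * deriv (deriv u) z"
    by (rule DERIV_imp_deriv) (auto intro!: derivative_eq_intros du)
  moreover have "deriv (\<lambda>w. w * deriv u w + a2 * u w) z = deriv u z + z * deriv (deriv u) z + a2 * deriv u z"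
    by (rule DERIV_imp_deriv) (auto intro!: derivative_eq_intros du u)
  ultimately show ?thesis
    by (simp add: hyp_op_def euler_op_def[abs_def] algebra_simps power2_eq_square)
qed

lemma holomorphic_on_euler_op: "u holomorphic_on S \<Longrightarrow> open S \<Longrightarrow> euler_op u holomorphic_on S"
  unfolding euler_op_def[abs_def] by (intro holomorphic_intros holomorphic_deriv)

lemma holomorphic_on_hyp_op:
  assumes "u holomorphic_on S" "open S"
  shows "hyp_op a0 a1 a2 u holomorphic_on S"
proof -
  have "(\<lambda>z. z^2 * deriv (deriv u) z + z * deriv u z
     - a0 * z * (z^2 * deriv (deriv u) z + (1 + a1 + a2) * z * deriv u z + a1 * a2 * u z)) holomorphic_on S"
    using assms by (intro holomorphic_intros holomorphic_deriv) auto
  thus ?thesis by (rule holomorphic_transform) (use hyp_op_expand[OF assms] in auto)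
qed

lemma hyp_op_linear:
  assumes u: "u holomorphic_on S" and v: "v holomorphic_on S" and S: "open S" "z \<in> S"
  shows "hyp_op a0 a1 a2 (\<lambda>w. a * u w + b * v w) z = a * hyp_op a0 a1 a2 u z + b * hyp_op a0 a1 a2 v z"
proof -
  have uv: "(\<lambda>w. a * u w + b * v w) holomorphic_on S"
    using u v by (intro holomorphic_intros)
  have "(deriv ^^ k) (\<lambda>w. a * u w + b * v w) z = a * (deriv ^^ k) u z + b * (deriv ^^ k) v z" for k
    using u v S by (simp add: higher_deriv_add[of "\<lambda>w. a * u w" S "\<lambda>w. b * v w"]
        higher_deriv_cmult holomorphic_on_mult)
  from this[of 1] this[of 2] show ?thesis
    unfolding hyp_op_expand[OF uv S] hyp_op_expand[OF u S] hyp_op_expand[OF v S]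
    by (simp add: numeral_2_eq_2 algebra_simps)
qed

lemma hyp_op_mult_add:
  assumes f: "f holomorphic_on S" and l: "l holomorphic_on S" and g: "g holomorphic_on S"
    and S: "open S" "z \<in> S"
  shows "hyp_op a0 a1 a2 (\<lambda>w. f w * l w + g w) z = l z * hyp_op a0 a1 a2 f z + hyp_op a0 a1 a2 g z
     + (1 - a0 * z) * z^2 * (2 * deriv f z * deriv l z + f z * deriv (deriv l) z)
     + z * f z * deriv l z * (1 - a0 * z * (1 + a1 + a2))"
proof -
  have fl: "(\<lambda>w. f w * l w + g w) holomorphic_on S"
    using f l g by (intro holomorphic_intros)
  have "(deriv ^^ k) (\<lambda>w. f w * l w + g w) z
      = (\<Sum>i = 0..k. of_nat (k choose i) * (deriv ^^ i) f z * (deriv ^^ (k - i)) l z) + (deriv ^^ k) g z" for k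
    using f l g S by (simp add: higher_deriv_add[of "\<lambda>w. f w * l w" S g] higher_deriv_mult holomorphic_on_mult)
  from this[of 1] this[of 2] show ?thesis
    unfolding hyp_op_expand[OF fl S] hyp_op_expand[OF f S] hyp_op_expand[OF g S]
    by (simp add: numeral_2_eq_2 algebra_simps)
qed

section \<open>Power series solutions\<close>

definition fps_euler :: "complex fps \<Rightarrow> complex fps" where
  "fps_euler U = fps_X * fps_deriv U"

lemma fps_euler_nth [simp]: "fps_euler U $ k = of_nat k * U $ k"
  by (cases k) (auto simp: fps_euler_def)

lemma euler_op_has_fps_expansion:
  "u has_fps_expansion U \<Longrightarrow> euler_op u has_fps_expansion fps_euler U"
  unfolding euler_op_def[abs_def] fps_euler_def
  by (intro has_fps_expansion_mult has_fps_expansion_fps_X has_fps_expansion_deriv)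

definition hyp_fps :: "complex \<Rightarrow> complex \<Rightarrow> complex \<Rightarrow> complex fps \<Rightarrow> complex fps" where
  "hyp_fps a0 a1 a2 U = fps_euler (fps_euler U) - fps_const a0 * fps_X *
     (fps_euler (fps_euler U + fps_const a2 * U) + fps_const a1 * (fps_euler U + fps_const a2 * U))"

lemma hyp_op_has_fps_expansion:
  "u has_fps_expansion U \<Longrightarrow> hyp_op a0 a1 a2 u has_fps_expansion hyp_fps a0 a1 a2 U"
  unfolding hyp_op_def[abs_def] hyp_fps_def
  by (intro has_fps_expansion_diff has_fps_expansion_mult has_fps_expansion_cmult_left
        has_fps_expansion_fps_X euler_op_has_fps_expansion has_fps_expansion_add) auto

lemma hyp_fps_nth_Suc:
  "hyp_fps a0 a1 a2 U $ Suc k = of_nat (Suc k) ^ 2 * U $ Suc k - a0 * (of_nat k + a1) * (of_nat k + a2) * U $ k"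
  by (simp add: hyp_fps_def algebra_simps power2_eq_square)

lemma hyp_fps_fps_expansion:
  assumes u: "u holomorphic_on ball 0 R" and R: "R > 0"
    and eq: "\<And>z. z \<in> ball 0 R \<Longrightarrow> hyp_op a0 a1 a2 u z = v z" and v: "v has_fps_expansion V"
  shows "hyp_fps a0 a1 a2 (fps_expansion u 0) = V"
proof -
  have "u has_fps_expansion fps_expansion u 0"
    using u R by (intro has_fps_expansion_fps_expansion) auto
  hence "hyp_op a0 a1 a2 u has_fps_expansion hyp_fps a0 a1 a2 (fps_expansion u 0)"
    by (rule hyp_op_has_fps_expansion)
  moreover have "eventually (\<lambda>z. hyp_op a0 a1 a2 u z = v z) (nhds 0)"
    using eventually_nhds_in_open[of "ball 0 R" 0] R eq by (auto elim: eventually_mono)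
  ultimately have "v has_fps_expansion hyp_fps a0 a1 a2 (fps_expansion u 0)"
    using has_fps_expansion_cong by blast
  thus ?thesis using v fps_expansion_unique_complex by blast
qed

lemma eval_fps_expansion_ball:
  assumes "u holomorphic_on ball 0 R" "z \<in> ball 0 R"
  shows "u z = (\<Sum>k. fps_expansion u 0 $ k * z ^ k)"
proof -
  have "u holomorphic_on eball 0 (ereal R)" using assms by simp
  from eval_fps_expansion[OF this, of z] assms show ?thesis by (simp add: eval_fps_def)
qed

definition hypF_coeff :: "complex \<Rightarrow> complex \<Rightarrow> complex \<Rightarrow> nat \<Rightarrow> complex" where
  "hypF_coeff a0 a1 a2 k = pochhammer a1 k * pochhammer a2 k / (of_nat (fact k))^2 * a0^k"

definition hypGt_weight :: "complex \<Rightarrow> complex \<Rightarrow> nat \<Rightarrow> complex" where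
  "hypGt_weight a1 a2 k = (\<Sum>l<k. (1 / (a1 + of_nat l) - 1 / (1 + of_nat l))
               + (1 / (a2 + of_nat l) - 1 / (1 + of_nat l)))"

lemma hypF_eq_series: "hypF a0 a1 a2 z = (\<Sum>k. hypF_coeff a0 a1 a2 k * z ^ k)"
  unfolding hypF_def hypF_coeff_def by (simp add: power_mult_distrib mult_ac)

lemma hypGt_eq_series: "hypGt a0 a1 a2 z = (\<Sum>k. hypF_coeff a0 a1 a2 k * hypGt_weight a1 a2 k * z ^ k)"
proof -
  have "(if k = 0 then 0 else pochhammer a1 k * pochhammer a2 k / (of_nat (fact k))^2
          * hypGt_weight a1 a2 k * (a0 * z) ^ k)
       = hypF_coeff a0 a1 a2 k * hypGt_weight a1 a2 k * z ^ k" for k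
    by (cases "k = 0") (simp_all add: hypGt_weight_def hypF_coeff_def power_mult_distrib mult_ac)
  thus ?thesis unfolding hypGt_def hypGt_weight_def[symmetric] by (simp only:)
qed

lemma hypF_coeff_Suc:
  "of_nat (Suc k) ^ 2 * hypF_coeff a0 a1 a2 (Suc k) = a0 * (of_nat k + a1) * (of_nat k + a2) * hypF_coeff a0 a1 a2 k"
proof -
  have "(of_nat (fact (Suc k)) :: complex) = of_nat (Suc k) * of_nat (fact k)"
    by (simp only: fact_Suc of_nat_mult of_nat_id)
  moreover have "(of_nat (Suc k) :: complex) \<noteq> 0" "(of_nat (fact k) :: complex) \<noteq> 0"
    by (simp_all del: of_nat_Suc)
  ultimately show ?thesis
    by (simp add: hypF_coeff_def pochhammer_Suc power_mult_distrib del: of_nat_Suc fact_Suc)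
      (simp add: field_simps)
qed

lemma hyp_fps_eq_0_imp_nth_eq_0:
  fixes U :: "complex fps"
  assumes "hyp_fps a0 a1 a2 U = 0" "U $ 0 = 0"
  shows "U $ k = 0"
proof (induction k)
  case (Suc k)
  have "hyp_fps a0 a1 a2 U $ Suc k = 0" using assms by simp
  thus ?case using Suc by (simp add: hyp_fps_nth_Suc del: of_nat_Suc)
qed (use assms in simp)

lemma hyp_fps_eq_0_imp_nth_eq_hypF_coeff:
  fixes U :: "complex fps"
  assumes "hyp_fps a0 a1 a2 U = 0" "U $ 0 = 1"
  shows "U $ k = hypF_coeff a0 a1 a2 k"
proof (induction k)
  case (Suc k)
  have "of_nat (Suc k) ^ 2 * U $ Suc k = a0 * (of_nat k + a1) * (of_nat k + a2) * U $ k"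
    using arg_cong[OF assms(1), of "\<lambda>U. U $ Suc k"] by (simp add: hyp_fps_nth_Suc del: of_nat_Suc)
  also have "\<dots> = of_nat (Suc k) ^ 2 * hypF_coeff a0 a1 a2 (Suc k)"
    using Suc hypF_coeff_Suc by simp
  finally show ?case by (simp del: of_nat_Suc)
qed (use assms in \<open>simp add: hypF_coeff_def\<close>)

lemma hyp_fps_nth_eq_hypGt_coeff:
  fixes U :: "complex fps"
  assumes eq: "\<And>k. hyp_fps a0 a1 a2 U $ Suc k = - 2 * of_nat (Suc k) * hypF_coeff a0 a1 a2 (Suc k)
                 + a0 * (2 * of_nat k + a1 + a2) * hypF_coeff a0 a1 a2 k"
    and U0: "U $ 0 = 0" and anpi: "\<forall>l::nat. a1 + of_nat l \<noteq> 0 \<and> a2 + of_nat l \<noteq> 0"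
  shows "U $ k = hypF_coeff a0 a1 a2 k * hypGt_weight a1 a2 k"
proof (induction k)
  case (Suc k)
  define K :: complex where "K = of_nat k"
  define c where "c = hypF_coeff a0 a1 a2 k"
  define c' where "c' = hypF_coeff a0 a1 a2 (Suc k)"
  define S where "S = hypGt_weight a1 a2 k"
  have "K + 1 = of_nat (Suc k)" by (simp add: K_def)
  hence ne: "a1 + K \<noteq> 0" "a2 + K \<noteq> 0" "K + 1 \<noteq> 0"
    using anpi by (auto simp: K_def simp del: of_nat_Suc)
  have rec: "(K + 1)^2 * c' = a0 * (K + a1) * (K + a2) * c"
    using hypF_coeff_Suc[of k a0 a1 a2] by (simp add: K_def c_def c'_def add.commute)
  have "(K + 1)^2 * U $ Suc k = a0 * (K + a1) * (K + a2) * (c * S)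
      - 2 * (K + 1) * c' + a0 * (2 * K + a1 + a2) * c"
    using eq[of k] Suc by (simp add: hyp_fps_nth_Suc K_def c_def c'_def S_def algebra_simps)
  also have "\<dots> = ((K + 1)^2 * c') * S + ((K + 1)^2 * c') / (a1 + K) + ((K + 1)^2 * c') / (a2 + K)
      - 2 * (K + 1) * c'"
  proof -
    have "a0 * (K + a1) * (K + a2) * c / (a1 + K) = a0 * (K + a2) * c"
      "a0 * (K + a1) * (K + a2) * c / (a2 + K) = a0 * (K + a1) * c"
      using ne by (simp_all add: add.commute)
    thus ?thesis unfolding rec by (simp add: algebra_simps)
  qed
  also have "\<dots> = (K + 1)^2 * (c' * (S + 1 / (a1 + K) + 1 / (a2 + K) - 2 / (K + 1)))"
    using ne(3) by (simp add: ring_distribs power2_eq_square) (simp add: field_simps)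
  finally have "U $ Suc k = c' * (S + 1 / (a1 + K) + 1 / (a2 + K) - 2 / (K + 1))"
    using ne by simp
  thus ?case by (simp add: hypGt_weight_def S_def K_def c'_def add.commute)
qed (use U0 in \<open>simp add: hypGt_weight_def\<close>)

lemma hyp_op_eq_0_imp_fps_expansion_nth:
  assumes f: "f holomorphic_on ball 0 R" and R: "R > 0"
    and eq: "\<And>z. z \<in> ball 0 R \<Longrightarrow> hyp_op a0 a1 a2 f z = 0" and f0: "f 0 = 1"
  shows "fps_expansion f 0 $ k = hypF_coeff a0 a1 a2 k"
proof -
  have "hyp_fps a0 a1 a2 (fps_expansion f 0) = 0"
    using f R eq by (rule hyp_fps_fps_expansion) auto
  thus ?thesis by (rule hyp_fps_eq_0_imp_nth_eq_hypF_coeff) (simp add: fps_expansion_def f0)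
qed

lemma hyp_op_eq_0_imp_eq_hypF:
  assumes f: "f holomorphic_on ball 0 R" and R: "R > 0"
    and eq: "\<And>z. z \<in> ball 0 R \<Longrightarrow> hyp_op a0 a1 a2 f z = 0" and f0: "f 0 = 1"
    and z: "z \<in> ball 0 R"
  shows "f z = hypF a0 a1 a2 z"
  using hyp_op_eq_0_imp_fps_expansion_nth[OF f R eq f0]
  unfolding eval_fps_expansion_ball[OF f z] hypF_eq_series by simp

lemma hyp_op_eq_0_imp_eq_0:
  assumes u: "u holomorphic_on ball 0 R" and R: "R > 0"
    and eq: "\<And>z. z \<in> ball 0 R \<Longrightarrow> hyp_op a0 a1 a2 u z = 0" and u0: "u 0 = 0"
    and z: "z \<in> ball 0 R"
  shows "u z = 0"
proof -
  have "hyp_fps a0 a1 a2 (fps_expansion u 0) = 0"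
    using u R eq by (rule hyp_fps_fps_expansion) auto
  hence "fps_expansion u 0 $ k = (0::complex)" for k
    by (rule hyp_fps_eq_0_imp_nth_eq_0) (simp add: fps_expansion_def u0)
  thus ?thesis unfolding eval_fps_expansion_ball[OF u z] by simp
qed

lemma hyp_op_eq_imp_eq_hypGt:
  assumes f: "f holomorphic_on ball 0 R" and R: "R > 0"
    and eqf: "\<And>z. z \<in> ball 0 R \<Longrightarrow> hyp_op a0 a1 a2 f z = 0" and f0: "f 0 = 1"
    and g: "g holomorphic_on ball 0 R" and g0: "g 0 = 0"
    and eqg: "\<And>z. z \<in> ball 0 R \<Longrightarrow>
      hyp_op a0 a1 a2 g z = - 2 * euler_op f z + a0 * z * (2 * euler_op f z + (a1 + a2) * f z)"
    and anpi: "\<forall>l::nat. a1 + of_nat l \<noteq> 0 \<and> a2 + of_nat l \<noteq> 0"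
    and z: "z \<in> ball 0 R"
  shows "g z = hypGt a0 a1 a2 z"
proof -
  define F :: "complex fps" where "F = fps_expansion f 0"
  have "f has_fps_expansion F"
    unfolding F_def using f R by (intro has_fps_expansion_fps_expansion) auto
  hence "(\<lambda>z. - 2 * euler_op f z + a0 * z * (2 * euler_op f z + (a1 + a2) * f z)) has_fps_expansion
     fps_const (-2) * fps_euler F + fps_const a0 * fps_X * (fps_const 2 * fps_euler F + fps_const (a1 + a2) * F)"
    by (intro has_fps_expansion_add has_fps_expansion_cmult_left has_fps_expansion_mult
          has_fps_expansion_fps_X euler_op_has_fps_expansion)
  with g R eqg have G: "hyp_fps a0 a1 a2 (fps_expansion g 0) =
     fps_const (-2) * fps_euler F + fps_const a0 * fps_X * (fps_const 2 * fps_euler F + fps_const (a1 + a2) * F)"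
    by (rule hyp_fps_fps_expansion)
  have "F $ k = hypF_coeff a0 a1 a2 k" for k
    unfolding F_def by (rule hyp_op_eq_0_imp_fps_expansion_nth[OF f R eqf f0])
  hence "hyp_fps a0 a1 a2 (fps_expansion g 0) $ Suc k = - 2 * of_nat (Suc k) * hypF_coeff a0 a1 a2 (Suc k)
                 + a0 * (2 * of_nat k + a1 + a2) * hypF_coeff a0 a1 a2 k" for k
    unfolding G mult.assoc by (simp add: ring_distribs)
  hence "fps_expansion g 0 $ k = hypF_coeff a0 a1 a2 k * hypGt_weight a1 a2 k" for k
    by (rule hyp_fps_nth_eq_hypGt_coeff[OF _ _ anpi]) (simp add: fps_expansion_def g0)
  thus ?thesis unfolding eval_fps_expansion_ball[OF g z] hypGt_eq_series by simp
qed

section \<open>Logarithmic solutions\<close>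

lemma holomorphic_eq_off_nonpos_Reals:
  assumes f: "f holomorphic_on ball 0 r" and g: "g holomorphic_on ball 0 r"
    and eq: "\<And>z. z \<in> ball 0 r \<Longrightarrow> z \<notin> \<real>\<^sub>\<le>\<^sub>0 \<Longrightarrow> f z = g z" and z: "z \<in> ball 0 r"
  shows "f z = g z"
proof (rule analytic_continuation_open[OF _ open_ball _ connected_ball _ f g _ z])
  define S :: "complex set" where "S = ball 0 r - \<real>\<^sub>\<le>\<^sub>0"
  have "r > 0" using z norm_ge_zero[of z] by (simp only: mem_ball dist_0_norm)
  hence "complex_of_real (r / 2) \<in> S" by (auto simp: S_def complex_nonpos_Reals_iff)
  thus "S \<noteq> {}" by blast
  show "open S" unfolding S_def by (intro open_Diff) auto
  show "S \<subseteq> ball 0 r" unfolding S_def by blast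
  show "f w = g w" if "w \<in> S" for w
    using that eq by (auto simp: S_def)
qed

lemma deriv_Ln: "z \<notin> \<real>\<^sub>\<le>\<^sub>0 \<Longrightarrow> deriv Ln z = 1 / z"
  using DERIV_imp_deriv[OF has_field_derivative_Ln] by (simp add: divide_inverse)

lemma deriv2_Ln:
  assumes z: "z \<notin> \<real>\<^sub>\<le>\<^sub>0"
  shows "deriv (deriv Ln) z = - 1 / z ^ 2"
proof -
  have "eventually (\<lambda>w. w \<in> - \<real>\<^sub>\<le>\<^sub>0) (nhds z)"
    using z by (intro eventually_nhds_in_open) auto
  hence "eventually (\<lambda>w. deriv Ln w = inverse w) (nhds z)"
    by eventually_elim (simp add: deriv_Ln divide_inverse)
  hence "deriv (deriv Ln) z = deriv inverse z" by (rule deriv_cong_ev) simp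
  also have "\<dots> = - 1 / z ^ 2"
    using z by (intro DERIV_imp_deriv) (auto intro!: derivative_eq_intros simp: power2_eq_square divide_inverse)
  finally show ?thesis .
qed

lemma hyp_op_Ln_partner:
  assumes f: "f holomorphic_on ball 0 r" and g: "g holomorphic_on ball 0 r"
    and eqf: "\<And>z. z \<in> ball 0 r \<Longrightarrow> hyp_op a0 a1 a2 f z = 0"
    and eq: "\<And>z. z \<in> ball 0 r \<Longrightarrow> z \<notin> \<real>\<^sub>\<le>\<^sub>0 \<Longrightarrow> hyp_op a0 a1 a2 (\<lambda>w. f w * Ln w + g w) z = 0"
    and z: "z \<in> ball 0 r"
  shows "hyp_op a0 a1 a2 g z = - 2 * euler_op f z + a0 * z * (2 * euler_op f z + (a1 + a2) * f z)"
proof (rule holomorphic_eq_off_nonpos_Reals[OF _ _ _ z])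
  show "hyp_op a0 a1 a2 g holomorphic_on ball 0 r" by (rule holomorphic_on_hyp_op[OF g open_ball])
  show "(\<lambda>z. - 2 * euler_op f z + a0 * z * (2 * euler_op f z + (a1 + a2) * f z)) holomorphic_on ball 0 r"
    using holomorphic_on_euler_op[OF f open_ball] f by (intro holomorphic_intros)
  fix z :: complex assume z: "z \<in> ball 0 r" "z \<notin> \<real>\<^sub>\<le>\<^sub>0"
  define S :: "complex set" where "S = ball 0 r - \<real>\<^sub>\<le>\<^sub>0"
  have S: "open S" "z \<in> S" using z by (auto simp: S_def intro: closed_nonpos_Reals_complex)
  have "0 = hyp_op a0 a1 a2 (\<lambda>w. f w * Ln w + g w) z" using eq z by simp
  also have "\<dots> = hyp_op a0 a1 a2 g z
     + (1 - a0 * z) * z^2 * (2 * deriv f z * (1 / z) + f z * (- 1 / z^2))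
     + z * f z * (1 / z) * (1 - a0 * z * (1 + a1 + a2))"
  proof -
    have "f holomorphic_on S" "g holomorphic_on S" "Ln holomorphic_on S"
      using f g by (auto simp: S_def intro: holomorphic_on_subset holomorphic_on_Ln)
    thus ?thesis using hyp_op_mult_add[of f S Ln g, OF _ _ _ S] eqf z by (simp add: deriv_Ln deriv2_Ln)
  qed
  also have "\<dots> = hyp_op a0 a1 a2 g z - (- 2 * euler_op f z + a0 * z * (2 * euler_op f z + (a1 + a2) * f z))"
    using z by (auto simp: euler_op_def field_simps power2_eq_square)
  finally show "hyp_op a0 a1 a2 g z = - 2 * euler_op f z + a0 * z * (2 * euler_op f z + (a1 + a2) * f z)"
    by simp
qed

lemma one_minus_notin_nonpos_Reals:
  fixes z :: complex
  assumes "norm z < 1"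
  shows "1 - z \<notin> \<real>\<^sub>\<le>\<^sub>0"
proof -
  have "Re (1 - z) > 0" using assms complex_Re_le_cmod[of z] by simp
  thus ?thesis by (auto simp: complex_nonpos_Reals_iff)
qed

lemma has_field_derivative_Ln_one_minus:
  assumes "norm (a0 * w) < 1"
  shows "((\<lambda>w. Ln (1 - a0 * w)) has_field_derivative - a0 / (1 - a0 * w)) (at w)"
  using assms by (auto intro!: derivative_eq_intros one_minus_notin_nonpos_Reals simp: field_simps)

lemma deriv2_Ln_one_minus:
  assumes w: "norm (a0 * w) < 1"
  shows "deriv (deriv (\<lambda>w. Ln (1 - a0 * w))) w = - (a0 ^ 2) / (1 - a0 * w) ^ 2"
proof -
  have "open {w. norm (a0 * w) < 1}"
    by (intro open_Collect_less continuous_intros)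
  hence "eventually (\<lambda>w. norm (a0 * w) < 1) (nhds w)"
    using eventually_nhds_in_open w by fastforce
  hence "eventually (\<lambda>w. deriv (\<lambda>w. Ln (1 - a0 * w)) w = - a0 / (1 - a0 * w)) (nhds w)"
    by eventually_elim (rule DERIV_imp_deriv[OF has_field_derivative_Ln_one_minus])
  hence "deriv (deriv (\<lambda>w. Ln (1 - a0 * w))) w = deriv (\<lambda>w. - a0 / (1 - a0 * w)) w"
    by (rule deriv_cong_ev) simp
  also have "\<dots> = - (a0 ^ 2) / (1 - a0 * w) ^ 2"
  proof (rule DERIV_imp_deriv)
    have "1 - a0 * w \<noteq> 0" using w by auto
    thus "((\<lambda>w. - a0 / (1 - a0 * w)) has_field_derivative - (a0 ^ 2) / (1 - a0 * w) ^ 2) (at w)"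
      by (auto intro!: derivative_eq_intros simp: power2_eq_square field_simps)
  qed
  finally show ?thesis .
qed

lemma hyp_op_Ln_one_minus_combination:
  assumes a12: "a1 + a2 = 1" and S: "open S" "z \<in> S" and small: "\<And>w. w \<in> S \<Longrightarrow> norm (a0 * w) < 1"
    and f: "f holomorphic_on S" and g: "g holomorphic_on S"
    and eqf: "hyp_op a0 a1 a2 f z = 0"
    and eqg: "hyp_op a0 a1 a2 g z = - 2 * euler_op f z + a0 * z * (2 * euler_op f z + f z)"
  shows "hyp_op a0 a1 a2 (\<lambda>w. f w * Ln (1 - a0 * w) + g w) z = - 2 * euler_op f z"
proof -
  define L where "L = (\<lambda>w. Ln (1 - a0 * w))"
  define q where "q = 1 - a0 * z"
  have L: "L holomorphic_on S"
    unfolding L_def using small by (intro holomorphic_intros) (auto intro!: one_minus_notin_nonpos_Reals)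
  have q: "q \<noteq> 0" using small[OF S(2)] by (auto simp: q_def)
  have "hyp_op a0 a1 a2 (\<lambda>w. f w * L w + g w) z = hyp_op a0 a1 a2 g z
     + q * z^2 * (2 * deriv f z * (- a0 / q) + f z * (- (a0 ^ 2) / q ^ 2))
     + z * f z * (- a0 / q) * (1 - a0 * z * 2)"
    using hyp_op_mult_add[OF f L g S, of a0 a1 a2] eqf a12 small[OF S(2)] unfolding L_def q_def
    by (simp add: DERIV_imp_deriv[OF has_field_derivative_Ln_one_minus] deriv2_Ln_one_minus add.assoc)
  also have "\<dots> = hyp_op a0 a1 a2 g z - 2 * a0 * z^2 * deriv f z - a0 * z * f z * (a0 * z + 1 - a0 * z * 2) / q"
    using q by (simp add: field_simps power2_eq_square)
  also have "a0 * z + 1 - a0 * z * 2 = q" by (simp add: q_def)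
  finally show ?thesis
    unfolding L_def eqg euler_op_def using q by (simp add: power2_eq_square algebra_simps)
qed

lemma hyp_op_eq_euler_op_imp_eq_Ln_one_minus:
  assumes a12: "a1 + a2 = 1" and R: "R > 0" and small: "\<And>w. w \<in> ball 0 R \<Longrightarrow> norm (a0 * w) < 1"
    and f: "f holomorphic_on ball 0 R" and g: "g holomorphic_on ball 0 R" and h: "h holomorphic_on ball 0 R"
    and eqf: "\<And>w. w \<in> ball 0 R \<Longrightarrow> hyp_op a0 a1 a2 f w = 0"
    and eqg: "\<And>w. w \<in> ball 0 R \<Longrightarrow>
      hyp_op a0 a1 a2 g w = - 2 * euler_op f w + a0 * w * (2 * euler_op f w + (a1 + a2) * f w)"
    and eqh: "\<And>w. w \<in> ball 0 R \<Longrightarrow> hyp_op a0 a1 a2 h w = c * euler_op f w"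
    and g0: "g 0 = 0" and h0: "h 0 = 0" and z: "z \<in> ball 0 R"
  shows "h z = - (c / 2) * (f z * Ln (1 - a0 * z) + g z)"
proof -
  define K where "K = (\<lambda>w. f w * Ln (1 - a0 * w) + g w)"
  have K: "K holomorphic_on ball 0 R"
    unfolding K_def using f g small by (intro holomorphic_intros) (auto intro!: one_minus_notin_nonpos_Reals)
  have hK: "(\<lambda>w. 1 * h w + (c / 2) * K w) holomorphic_on ball 0 R"
    using h K by (intro holomorphic_intros)
  have "hyp_op a0 a1 a2 (\<lambda>w. 1 * h w + (c / 2) * K w) w = 0" if w: "w \<in> ball 0 R" for w
  proof -
    have "hyp_op a0 a1 a2 K w = - 2 * euler_op f w"
      unfolding K_def using eqf[OF w] eqg[OF w] a12
      by (intro hyp_op_Ln_one_minus_combination[OF a12 open_ball w small f g]) auto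
    thus ?thesis unfolding hyp_op_linear[OF h K open_ball w] eqh[OF w] by simp
  qed
  moreover have "1 * h 0 + (c / 2) * K 0 = 0" by (simp add: K_def g0 h0)
  ultimately have "1 * h z + (c / 2) * K z = 0"
    by (rule hyp_op_eq_0_imp_eq_0[OF hK R _ _ z])
  thus ?thesis unfolding K_def by (simp add: algebra_simps add_eq_0_iff2)
qed

section \<open>Separately holomorphic functions\<close>

definition sep_holomorphic :: "complex set \<Rightarrow> complex set \<Rightarrow> cfun2 \<Rightarrow> bool" where
  "sep_holomorphic U V g \<longleftrightarrow>
     (\<forall>v\<in>V. (\<lambda>w. g w v) holomorphic_on U) \<and> (\<forall>w\<in>U. (\<lambda>v. g w v) holomorphic_on V)"

definition deriv1 :: "cfun2 \<Rightarrow> cfun2" where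
  "deriv1 g = (\<lambda>w v. deriv (\<lambda>w. g w v) w)"

definition deriv2 :: "cfun2 \<Rightarrow> cfun2" where
  "deriv2 g = (\<lambda>w v. deriv (\<lambda>v. g w v) v)"

lemma holo_polydisc_iff_sep_holomorphic: "holo_polydisc r f \<longleftrightarrow> sep_holomorphic (ball 0 r) (ball 0 r) f"
  by (simp add: holo_polydisc_def sep_holomorphic_def)

lemma sep_holomorphic_mono:
  "sep_holomorphic U V g \<Longrightarrow> U' \<subseteq> U \<Longrightarrow> V' \<subseteq> V \<Longrightarrow> sep_holomorphic U' V' g"
  unfolding sep_holomorphic_def by (meson holomorphic_on_subset subsetD)

lemma sep_holomorphic_swap: "sep_holomorphic V U (\<lambda>v w. g w v) \<longleftrightarrow> sep_holomorphic U V g"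
  by (auto simp: sep_holomorphic_def)

lemma deriv2_eq_swap_deriv1: "deriv2 g = (\<lambda>w v. deriv1 (\<lambda>v w. g w v) v w)"
  by (simp add: deriv1_def deriv2_def)

lemma holomorphic_higher_deriv_bound:
  assumes "phi holomorphic_on ball u \<rho>" "\<rho> > 0" "\<And>x. x \<in> ball u \<rho> \<Longrightarrow> norm (phi x) \<le> M"
  shows "norm ((deriv ^^ k) phi u) \<le> fact k * M / (\<rho> / 2) ^ k"
proof (rule Cauchy_inequality)
  have "cball u (\<rho> / 2) \<subseteq> ball u \<rho>" using assms(2) by (simp add: cball_subset_ball_iff)
  thus "phi holomorphic_on ball u (\<rho> / 2)" "continuous_on (cball u (\<rho> / 2)) phi"
    using assms(1) ball_subset_cball by (metis holomorphic_on_subset holomorphic_on_imp_continuous_on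
        continuous_on_subset order_trans)+
  show "norm (phi x) \<le> M" if "norm (u - x) = \<rho> / 2" for x
    using that assms(2,3) by (simp add: dist_norm)
qed (use assms(2) in simp)

lemma holomorphic_Taylor1_bound:
  assumes "phi holomorphic_on S" "open S" "convex S" "w \<in> S" "z \<in> S"
    and "\<And>x. x \<in> S \<Longrightarrow> norm (deriv (deriv phi) x) \<le> B"
  shows "norm (phi z - phi w - (z - w) * deriv phi w) \<le> B * norm (z - w) ^ 2"
proof -
  have "norm ((deriv ^^ 0) phi z - (\<Sum>i\<le>1. (deriv ^^ i) phi w * (z - w) ^ i / fact i))
      \<le> B * norm (z - w) ^ Suc 1 / fact 1"
  proof (rule complex_Taylor[OF assms(3) _ _ assms(4,5)])
    show "((deriv ^^ i) phi has_field_derivative (deriv ^^ Suc i) phi x) (at x within S)" if "x \<in> S" for i x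
      using assms(1,2) that by (auto intro!: holomorphic_derivI holomorphic_higher_deriv)
  qed (use assms(6) in \<open>simp add: numeral_2_eq_2\<close>)
  thus ?thesis by (simp add: algebra_simps power2_eq_square)
qed

lemma norm_difference_quotient_le:
  assumes R: "R > 0" and g: "sep_holomorphic (ball c R) V g"
    and M: "\<And>w v. w \<in> ball c R \<Longrightarrow> v \<in> V \<Longrightarrow> norm (g w v) \<le> M"
    and w: "w \<in> ball c (R / 2)" and h: "h \<noteq> 0" "norm h < R / 4" and v: "v \<in> V"
  shows "norm ((g (w + h) v - g w v) / h - deriv1 g w v) \<le> 128 * M / R ^ 2 * norm h"
proof -
  define B where "B = 128 * M / R ^ 2"
  have gv: "(\<lambda>w. g w v) holomorphic_on ball c R" using g v by (simp add: sep_holomorphic_def)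
  have "norm (deriv (deriv (\<lambda>w. g w v)) x) \<le> B" if x: "x \<in> ball c (3 * R / 4)" for x
  proof -
    have sub: "ball x (R / 4) \<subseteq> ball c R" using x by (simp add: ball_subset_ball_iff dist_commute)
    have "norm ((deriv ^^ 2) (\<lambda>w. g w v) x) \<le> fact 2 * M / (R / 4 / 2) ^ 2"
      using R v sub by (intro holomorphic_higher_deriv_bound holomorphic_on_subset[OF gv] M) auto
    thus ?thesis by (simp add: B_def numeral_2_eq_2 field_simps)
  qed
  moreover have "w \<in> ball c (3 * R / 4)" "w + h \<in> ball c (3 * R / 4)"
    using w h(2) R dist_triangle[of c "w + h" w] by (auto simp: dist_norm)
  moreover have "(\<lambda>w. g w v) holomorphic_on ball c (3 * R / 4)"
    using R by (intro holomorphic_on_subset[OF gv]) (simp add: subset_ball)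
  ultimately have "norm (g (w + h) v - g w v - h * deriv1 g w v) \<le> B * norm h ^ 2"
    using holomorphic_Taylor1_bound[of "\<lambda>w. g w v" "ball c (3 * R / 4)" w "w + h" B]
    by (simp add: deriv1_def)
  moreover have "(g (w + h) v - g w v) / h - deriv1 g w v = (g (w + h) v - g w v - h * deriv1 g w v) / h"
    using h by (simp add: field_simps)
  ultimately show ?thesis
    using h by (simp add: B_def norm_divide power2_eq_square divide_le_eq mult.assoc)
qed

lemma uniform_limit_difference_quotient:
  assumes R: "R > 0" and g: "sep_holomorphic (ball c R) V g"
    and M: "\<And>w v. w \<in> ball c R \<Longrightarrow> v \<in> V \<Longrightarrow> norm (g w v) \<le> M"
    and w: "w \<in> ball c (R / 2)"
  shows "uniform_limit V (\<lambda>h v. (g (w + h) v - g w v) / h) (deriv1 g w) (at 0)"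
  unfolding uniform_limit_iff
proof (intro allI impI)
  fix e :: real assume e: "e > 0"
  define B where "B = 128 * M / R ^ 2"
  have "eventually (\<lambda>h. h \<noteq> 0 \<and> norm h < min (R / 4) (e / (\<bar>B\<bar> + 1))) (at (0::complex))"
    using R e by (auto simp: eventually_at dist_norm intro!: exI[of _ "min (R / 4) (e / (\<bar>B\<bar> + 1))"])
  thus "eventually (\<lambda>h. \<forall>v\<in>V. dist ((g (w + h) v - g w v) / h) (deriv1 g w v) < e) (at 0)"
  proof eventually_elim
    case (elim h)
    have "B * norm h \<le> (\<bar>B\<bar> + 1) * norm h" by (intro mult_right_mono) auto
    also have "\<dots> < e" using elim by (simp add: field_simps)
    finally show ?case
      using norm_difference_quotient_le[OF R g M w] elim by (force simp: B_def dist_norm)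
  qed
qed

text \<open>Osgood's argument: by the Cauchy estimate the difference quotients in \<open>w\<close> converge
  uniformly in \<open>v\<close>, so the partial derivative stays holomorphic in \<open>v\<close>.\<close>
lemma holomorphic_on_deriv1:
  assumes R: "R > 0" and V: "open V" and g: "sep_holomorphic (ball c R) V g"
    and M: "\<And>w v. w \<in> ball c R \<Longrightarrow> v \<in> V \<Longrightarrow> norm (g w v) \<le> M"
    and w: "w \<in> ball c (R / 2)"
  shows "(\<lambda>v. deriv1 g w v) holomorphic_on V"
  unfolding holomorphic_on_open[OF V]
proof (intro ballI)
  fix v0 assume "v0 \<in> V"
  then obtain \<rho> where \<rho>: "\<rho> > 0" "cball v0 \<rho> \<subseteq> V" using V open_contains_cball by blast
  have "eventually (\<lambda>h. w + h \<in> ball c R) (at 0)"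
    unfolding eventually_at
  proof (intro exI[of _ "R / 2"] conjI ballI impI)
    show "R / 2 > 0" using R by simp
    fix h :: complex assume "h \<noteq> 0 \<and> dist h 0 < R / 2"
    thus "w + h \<in> ball c R" using w dist_triangle[of c "w + h" w] by (auto simp: dist_norm)
  qed
  hence "eventually (\<lambda>h. continuous_on (cball v0 \<rho>) (\<lambda>v. (g (w + h) v - g w v) / h) \<and>
      (\<lambda>v. (g (w + h) v - g w v) / h) holomorphic_on ball v0 \<rho>) (at 0)"
  proof eventually_elim
    case (elim h)
    have "(\<lambda>v. (g (w + h) v - g w v) / h) holomorphic_on V"
      using g elim w R unfolding sep_holomorphic_def by (intro holomorphic_intros) auto
    thus ?case using \<rho>(2) ball_subset_cball
      by (meson holomorphic_on_imp_continuous_on continuous_on_subset holomorphic_on_subset order_trans)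
  qed
  moreover have "uniform_limit (cball v0 \<rho>) (\<lambda>h v. (g (w + h) v - g w v) / h) (deriv1 g w) (at 0)"
    using uniform_limit_difference_quotient[OF R g M w] \<rho>(2) by (rule uniform_limit_on_subset)
  ultimately have "(\<lambda>v. deriv1 g w v) holomorphic_on ball v0 \<rho>"
    by (rule holomorphic_uniform_limit) auto
  hence "(\<lambda>v. deriv1 g w v) field_differentiable at v0"
    using \<rho>(1) by (intro holomorphic_on_imp_differentiable_at[of _ "ball v0 \<rho>"]) auto
  thus "\<exists>d. ((\<lambda>v. deriv1 g w v) has_field_derivative d) (at v0)"
    by (simp add: field_differentiable_def)
qed

lemma sep_holomorphic_deriv1:
  assumes R: "R > 0" and V: "open V" and g: "sep_holomorphic (ball c R) V g"
    and M: "\<And>w v. w \<in> ball c R \<Longrightarrow> v \<in> V \<Longrightarrow> norm (g w v) \<le> M"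
  shows "sep_holomorphic (ball c (R / 2)) V (deriv1 g)"
    and "\<And>w v. w \<in> ball c (R / 2) \<Longrightarrow> v \<in> V \<Longrightarrow> norm (deriv1 g w v) \<le> 4 * M / R"
proof -
  have gw: "(\<lambda>w. g w v) holomorphic_on ball c R" if "v \<in> V" for v
    using g that by (auto simp: sep_holomorphic_def)
  show "norm (deriv1 g w v) \<le> 4 * M / R" if w: "w \<in> ball c (R / 2)" and v: "v \<in> V" for w v
  proof -
    have "ball w (R / 2) \<subseteq> ball c R" using w by (simp add: ball_subset_ball_iff dist_commute)
    hence "norm ((deriv ^^ 1) (\<lambda>w. g w v) w) \<le> fact 1 * M / (R / 2 / 2) ^ 1"
      using R v by (intro holomorphic_higher_deriv_bound M holomorphic_on_subset[OF gw]) auto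
    thus ?thesis by (simp add: deriv1_def mult.commute)
  qed
  have "(\<lambda>w. deriv1 g w v) holomorphic_on ball c (R / 2)" if "v \<in> V" for v
    using gw[OF that] R unfolding deriv1_def
    by (intro holomorphic_on_subset[OF holomorphic_deriv]) (auto simp: subset_ball)
  thus "sep_holomorphic (ball c (R / 2)) V (deriv1 g)"
    using holomorphic_on_deriv1[OF R V g M] by (simp add: sep_holomorphic_def)
qed

lemma sep_holomorphic_deriv2:
  assumes R: "R > 0" and U: "open U" and g: "sep_holomorphic U (ball c R) g"
    and M: "\<And>w v. w \<in> U \<Longrightarrow> v \<in> ball c R \<Longrightarrow> norm (g w v) \<le> M"
  shows "sep_holomorphic U (ball c (R / 2)) (deriv2 g)"
    and "\<And>w v. w \<in> U \<Longrightarrow> v \<in> ball c (R / 2) \<Longrightarrow> norm (deriv2 g w v) \<le> 4 * M / R"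
proof -
  have g': "sep_holomorphic (ball c R) U (\<lambda>v w. g w v)"
    using g by (rule sep_holomorphic_swap[THEN iffD2])
  have M': "\<And>v w. v \<in> ball c R \<Longrightarrow> w \<in> U \<Longrightarrow> norm (g w v) \<le> M"
    using M by blast
  show "sep_holomorphic U (ball c (R / 2)) (deriv2 g)"
    using sep_holomorphic_deriv1(1)[OF R U g' M'] unfolding deriv2_eq_swap_deriv1
    by (rule sep_holomorphic_swap[THEN iffD1])
  show "norm (deriv2 g w v) \<le> 4 * M / R" if "w \<in> U" "v \<in> ball c (R / 2)" for w v
    using sep_holomorphic_deriv1(2)[OF R U g' M', of v w] that by (simp add: deriv2_eq_swap_deriv1)
qed

lemma Baire_bound_separately_continuous:
  fixes phi :: "'a::complete_space \<Rightarrow> 'b::topological_space \<Rightarrow> real"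
  assumes U: "open U" "U \<noteq> {}" and K: "compact K" "K \<noteq> {}"
    and cont1: "\<And>v. v \<in> K \<Longrightarrow> continuous_on U (\<lambda>w. phi w v)"
    and cont2: "\<And>w. w \<in> U \<Longrightarrow> continuous_on K (phi w)"
  shows "\<exists>c d M. d > 0 \<and> ball c d \<subseteq> U \<and> (\<forall>w\<in>ball c d. \<forall>v\<in>K. phi w v \<le> M)"
proof -
  define E where "E = (\<lambda>m::nat. {w\<in>U. \<forall>v\<in>K. phi w v \<le> real m})"
  have UE: "\<Union>(range E) = U"
  proof (intro equalityI subsetI)
    fix w assume w: "w \<in> U"
    obtain x where "x \<in> K" "\<forall>y\<in>K. phi w y \<le> phi w x"
      using continuous_attains_sup[OF K cont2[OF w]] by blast
    moreover obtain m :: nat where "phi w x \<le> real m" using real_arch_simple by blast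
    ultimately have "w \<in> E m" using w by (auto simp: E_def intro: order_trans)
    thus "w \<in> \<Union>(range E)" by blast
  qed (auto simp: E_def)
  have closed: "closedin (top_of_set U) (E m)" for m
  proof -
    have "E m = (\<Inter>v\<in>K. U \<inter> (\<lambda>w. phi w v) -` {..real m})"
      using K(2) by (auto simp: E_def)
    also have "closedin (top_of_set U) \<dots>"
    proof (rule closedin_Inter)
      fix S assume "S \<in> (\<lambda>v. U \<inter> (\<lambda>w. phi w v) -` {..real m}) ` K"
      then obtain v where "v \<in> K" and S: "S = U \<inter> (\<lambda>w. phi w v) -` {..real m}" by blast
      show "closedin (top_of_set U) S"
        unfolding S by (rule continuous_closedin_preimage) (use cont1 \<open>v \<in> K\<close> in auto)
    qed (use K(2) in auto)
    finally show ?thesis .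
  qed
  have "\<exists>m. top_of_set U interior_of E m \<noteq> {}"
  proof (rule ccontr)
    assume "\<nexists>m. top_of_set U interior_of E m \<noteq> {}"
    moreover have "completely_metrizable_space (top_of_set U)"
      using U(1) by (intro completely_metrizable_space_openin completely_metrizable_space_euclidean) auto
    ultimately have "top_of_set U interior_of \<Union>(range E) = {}"
      using closed by (intro Baire_category_alt) auto
    moreover have "top_of_set U interior_of U = U"
      using U(1) by (simp add: interior_of_openin)
    ultimately show False using UE U(2) by simp
  qed
  then obtain m where "top_of_set U interior_of E m \<noteq> {}" by blast
  then obtain c where "c \<in> interior (E m)"
    using interior_of_subtopology_open[of euclidean U "E m"] U(1) by auto
  then obtain d where "d > 0" "ball c d \<subseteq> E m"
    using open_contains_ball interior_subset by (meson open_interior subset_trans)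
  thus ?thesis unfolding E_def by blast
qed

lemma sep_holomorphic_locally_bounded:
  assumes g: "sep_holomorphic U (ball 0 r) g" and U: "open U" "U \<noteq> {}" and r: "r > 0"
  shows "\<exists>c d M. d > 0 \<and> ball c d \<subseteq> U \<and> (\<forall>w\<in>ball c d. \<forall>v\<in>ball 0 (r / 2). norm (g w v) \<le> M)"
proof -
  have K: "cball 0 (r / 2) \<subseteq> ball (0::complex) r" using r by (simp add: cball_subset_ball_iff)
  have "cball (0::complex) (r / 2) \<noteq> {}" using r by simp
  moreover have "continuous_on U (\<lambda>w. norm (g w v))" if "v \<in> cball 0 (r / 2)" for v
    using g that K unfolding sep_holomorphic_def
    by (intro continuous_intros holomorphic_on_imp_continuous_on) auto
  moreover have "continuous_on (cball 0 (r / 2)) (\<lambda>v. norm (g w v))" if "w \<in> U" for w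
  proof -
    have "continuous_on (ball 0 r) (\<lambda>v. norm (g w v))"
      using g that unfolding sep_holomorphic_def
      by (intro continuous_intros holomorphic_on_imp_continuous_on) auto
    thus ?thesis using K by (rule continuous_on_subset)
  qed
  ultimately have "\<exists>c d M. d > 0 \<and> ball c d \<subseteq> U \<and> (\<forall>w\<in>ball c d. \<forall>v\<in>cball 0 (r / 2). norm (g w v) \<le> M)"
    by (rule Baire_bound_separately_continuous[where phi = "\<lambda>w v. norm (g w v)", OF U compact_cball])
  moreover have "ball 0 (r / 2) \<subseteq> cball (0::complex) (r / 2)" by auto
  ultimately show ?thesis by blast
qed

section \<open>The logarithmic solution in z2 at z2 = 0\<close>

lemma theta2_eq_deriv2: "theta2 f z1 z2 = z2 * deriv2 f z1 z2"
  by (simp add: theta2_def deriv2_def)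

lemma theta2_Ln_z2:
  assumes V: "open V" "T \<in> V" and T: "T \<notin> \<real>\<^sub>\<le>\<^sub>0"
    and P: "(\<lambda>v. P w v) holomorphic_on V" and H: "(\<lambda>v. H w v) holomorphic_on V"
  shows "theta2 (\<lambda>w1 w2. P w1 w2 * Ln w2 + H w1 w2) w T = Ln T * theta2 P w T + P w T + theta2 H w T"
proof -
  have "((\<lambda>v. P w v) has_field_derivative deriv2 P w T) (at T)"
    "((\<lambda>v. H w v) has_field_derivative deriv2 H w T) (at T)"
    using P H V unfolding deriv2_def by (auto intro: holomorphic_derivI)
  hence "((\<lambda>v. P w v * Ln v + H w v) has_field_derivative
      deriv2 P w T * Ln T + P w T * inverse T + deriv2 H w T) (at T)"
    using T by (auto intro!: derivative_eq_intros)
  hence "deriv2 (\<lambda>w1 w2. P w1 w2 * Ln w2 + H w1 w2) w T = deriv2 P w T * Ln T + P w T * inverse T + deriv2 H w T"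
    unfolding deriv2_def by (rule DERIV_imp_deriv)
  thus ?thesis using T by (auto simp: theta2_eq_deriv2 field_simps)
qed

lemma L1_Ln_z2:
  assumes U: "open U" "z1 \<in> U" and V: "open V" "T \<in> V" and T: "T \<notin> \<real>\<^sub>\<le>\<^sub>0"
    and P: "sep_holomorphic U V P" "sep_holomorphic U V (deriv2 P)"
    and H: "sep_holomorphic U V H" "sep_holomorphic U V (deriv2 H)"
  shows "L1 n a0 a1 a2 (\<lambda>w1 w2. P w1 w2 * Ln w2 + H w1 w2) z1 T
       = Ln T * L1 n a0 a1 a2 P z1 T - of_nat n * theta1 P z1 T + L1 n a0 a1 a2 H z1 T"
proof -
  define Pi where "Pi = (\<lambda>w1 w2. P w1 w2 * Ln w2 + H w1 w2)"
  have hol: "(\<lambda>w. P w T) holomorphic_on U" "(\<lambda>w. H w T) holomorphic_on U"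
    "(\<lambda>w. theta2 P w T) holomorphic_on U" "(\<lambda>w. theta2 H w T) holomorphic_on U"
    using P H V(2) unfolding theta2_eq_deriv2 sep_holomorphic_def by (auto intro!: holomorphic_intros)
  have "theta2 Pi w T = Ln T * theta2 P w T + P w T + theta2 H w T" if "w \<in> U" for w
    using P H that unfolding Pi_def sep_holomorphic_def by (intro theta2_Ln_z2[OF V T, of P w H]) auto
  hence "eventually (\<lambda>w. theta2 Pi w T = Ln T * theta2 P w T + P w T + theta2 H w T) (nhds z1)"
    using eventually_nhds_in_open[OF U] by (auto elim: eventually_mono)
  hence "euler_op (\<lambda>w. theta2 Pi w T) z1
      = z1 * deriv (\<lambda>w. Ln T * theta2 P w T + P w T + theta2 H w T) z1"
    unfolding euler_op_def by (simp add: deriv_cong_ev)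
  also have "\<dots> = Ln T * euler_op (\<lambda>w. theta2 P w T) z1 + euler_op (\<lambda>w. P w T) z1
      + euler_op (\<lambda>w. theta2 H w T) z1"
  proof -
    have "((\<lambda>w. Ln T * theta2 P w T + P w T + theta2 H w T) has_field_derivative
        Ln T * deriv (\<lambda>w. theta2 P w T) z1 + deriv (\<lambda>w. P w T) z1 + deriv (\<lambda>w. theta2 H w T) z1) (at z1)"
      using hol[THEN holomorphic_derivI, OF U] by (intro DERIV_add DERIV_cmult)
    thus ?thesis unfolding euler_op_def by (simp add: DERIV_imp_deriv algebra_simps)
  qed
  finally have theta: "euler_op (\<lambda>w. theta2 Pi w T) z1 = \<dots>" .
  have "hyp_op a0 a1 a2 (\<lambda>w. Ln T * P w T + 1 * H w T) z1
      = Ln T * hyp_op a0 a1 a2 (\<lambda>w. P w T) z1 + 1 * hyp_op a0 a1 a2 (\<lambda>w. H w T) z1"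
    using hol(1,2) U by (rule hyp_op_linear)
  hence "hyp_op a0 a1 a2 (\<lambda>w. Pi w T) z1
      = Ln T * hyp_op a0 a1 a2 (\<lambda>w. P w T) z1 + hyp_op a0 a1 a2 (\<lambda>w. H w T) z1"
    by (simp add: Pi_def mult.commute)
  thus ?thesis
    unfolding Pi_def[symmetric] L1_eq_hyp_op theta
    by (simp add: theta1_def euler_op_def algebra_simps)
qed

lemma holomorphic_on_L1_z2:
  assumes U: "open U" "z1 \<in> U"
    and H: "sep_holomorphic U V H" "sep_holomorphic U V (deriv1 H)" "sep_holomorphic U V (deriv1 (deriv1 H))"
      "sep_holomorphic U V (deriv2 H)" "sep_holomorphic U V (deriv1 (deriv2 H))"
  shows "(\<lambda>T. L1 n a0 a1 a2 H z1 T) holomorphic_on V"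
proof (rule holomorphic_transform)
  show "(\<lambda>T. - of_nat n * (z1 * (T * deriv1 (deriv2 H) z1 T))
      + (z1^2 * deriv1 (deriv1 H) z1 T + z1 * deriv1 H z1 T
         - a0 * z1 * (z1^2 * deriv1 (deriv1 H) z1 T + (1 + a1 + a2) * z1 * deriv1 H z1 T + a1 * a2 * H z1 T)))
      holomorphic_on V"
    using H U(2) unfolding sep_holomorphic_def by (intro holomorphic_intros) auto
  fix T assume T: "T \<in> V"
  have HT: "(\<lambda>w. H w T) holomorphic_on U" and H2T: "(\<lambda>w. deriv2 H w T) holomorphic_on U"
    using H(1,4) T by (auto simp: sep_holomorphic_def)
  have "euler_op (\<lambda>w. theta2 H w T) z1 = z1 * (T * deriv1 (deriv2 H) z1 T)"
    using holomorphic_derivI[OF H2T U] unfolding euler_op_def theta2_eq_deriv2 deriv1_def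
    by (simp add: DERIV_imp_deriv DERIV_cmult)
  moreover have "deriv (deriv (\<lambda>w. H w T)) z1 = deriv1 (deriv1 H) z1 T"
    by (simp add: deriv1_def)
  ultimately show "- of_nat n * (z1 * (T * deriv1 (deriv2 H) z1 T))
      + (z1^2 * deriv1 (deriv1 H) z1 T + z1 * deriv1 H z1 T
         - a0 * z1 * (z1^2 * deriv1 (deriv1 H) z1 T + (1 + a1 + a2) * z1 * deriv1 H z1 T + a1 * a2 * H z1 T))
      = L1 n a0 a1 a2 H z1 T"
    unfolding L1_eq_hyp_op hyp_op_expand[OF HT U] by (simp add: deriv1_def)
qed

text \<open>After the cancellation in \<open>L1_Ln_z2\<close> and \<open>L\<^sub>1 P = 0\<close>, the remaining expression is holomorphic in
  \<open>z\<^sub>2\<close> across the cut, so its vanishing off the cut persists at \<open>z\<^sub>2 = 0\<close>.\<close>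
lemma hyp_op_Ln_z2_partner_local:
  fixes P H :: cfun2
  assumes d: "d > 0" and \<rho>: "\<rho> > 0"
    and P: "sep_holomorphic (ball c d) (ball 0 \<rho>) P" and H: "sep_holomorphic (ball c d) (ball 0 \<rho>) H"
    and MP: "\<And>w v. w \<in> ball c d \<Longrightarrow> v \<in> ball 0 \<rho> \<Longrightarrow> norm (P w v) \<le> M"
    and MH: "\<And>w v. w \<in> ball c d \<Longrightarrow> v \<in> ball 0 \<rho> \<Longrightarrow> norm (H w v) \<le> M"
    and P_L1: "\<And>w v. w \<in> ball c d \<Longrightarrow> v \<in> ball 0 \<rho> \<Longrightarrow> L1 n a0 a1 a2 P w v = 0"
    and Pi_L1: "\<And>w v. w \<in> ball c d \<Longrightarrow> v \<in> ball 0 \<rho> \<Longrightarrow> v \<notin> \<real>\<^sub>\<le>\<^sub>0 \<Longrightarrow>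
                  L1 n a0 a1 a2 (\<lambda>w1 w2. P w1 w2 * Ln w2 + H w1 w2) w v = 0"
    and z: "z \<in> ball c (d / 4)"
  shows "hyp_op a0 a1 a2 (\<lambda>w. H w 0) z = of_nat n * euler_op (\<lambda>w. P w 0) z"
proof -
  define U where "U = ball c (d / 4)"
  define V where "V = ball (0::complex) (\<rho> / 2)"
  have UV: "U \<subseteq> ball c (d / 2 / 2)" "U \<subseteq> ball c (d / 2)" "U \<subseteq> ball c d"
    "V \<subseteq> ball 0 \<rho>" "V \<subseteq> ball 0 (\<rho> / 2)"
    using d \<rho> by (auto simp: U_def V_def subset_ball)
  note H1 = sep_holomorphic_deriv1[OF d open_ball H MH]
  note H11 = sep_holomorphic_deriv1[OF half_gt_zero[OF d] open_ball H1]
  note H2 = sep_holomorphic_deriv2[OF \<rho> open_ball H MH]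
  note H21 = sep_holomorphic_deriv1[OF d open_ball H2]
  note P1 = sep_holomorphic_deriv1[OF d open_ball P MP]
  note P2 = sep_holomorphic_deriv2[OF \<rho> open_ball P MP]
  have sep: "sep_holomorphic U V P" "sep_holomorphic U V (deriv2 P)" "sep_holomorphic U V (deriv1 P)"
    "sep_holomorphic U V H" "sep_holomorphic U V (deriv1 H)" "sep_holomorphic U V (deriv1 (deriv1 H))"
    "sep_holomorphic U V (deriv2 H)" "sep_holomorphic U V (deriv1 (deriv2 H))"
    using sep_holomorphic_mono[OF P UV(3,4)] sep_holomorphic_mono[OF P2(1) UV(3,5)]
      sep_holomorphic_mono[OF P1(1) UV(2,4)] sep_holomorphic_mono[OF H UV(3,4)]
      sep_holomorphic_mono[OF H1(1) UV(2,4)] sep_holomorphic_mono[OF H11(1) UV(1,4)]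
      sep_holomorphic_mono[OF H2(1) UV(3,5)] sep_holomorphic_mono[OF H21(1) UV(2,5)]
    by auto
  define E where "E = (\<lambda>T. L1 n a0 a1 a2 H z T - of_nat n * theta1 P z T)"
  have zU: "z \<in> U" using z by (simp add: U_def)
  have "(\<lambda>T. L1 n a0 a1 a2 H z T) holomorphic_on V"
    using holomorphic_on_L1_z2[OF open_ball zU[unfolded U_def] sep(4-8)[unfolded U_def]] .
  moreover have "(\<lambda>T. deriv1 P z T) holomorphic_on V"
    using sep(3) zU by (simp add: sep_holomorphic_def)
  ultimately have "E holomorphic_on ball 0 (\<rho> / 2)"
    unfolding E_def theta1_def V_def by (intro holomorphic_intros) (simp_all add: deriv1_def)
  moreover have "E T = 0" if T: "T \<in> V" "T \<notin> \<real>\<^sub>\<le>\<^sub>0" for T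
  proof -
    have "z \<in> ball c d" "T \<in> ball 0 \<rho>" using zU T(1) UV by auto
    hence "L1 n a0 a1 a2 P z T = 0" "L1 n a0 a1 a2 (\<lambda>w1 w2. P w1 w2 * Ln w2 + H w1 w2) z T = 0"
      using P_L1 Pi_L1 T(2) by auto
    thus ?thesis
      using L1_Ln_z2[OF open_ball zU[unfolded U_def] open_ball T(1)[unfolded V_def] T(2)
          sep(1,2,4,7)[unfolded U_def V_def]]
      by (simp add: E_def)
  qed
  ultimately have "E 0 = 0"
    using \<rho> holomorphic_eq_off_nonpos_Reals[of E "\<rho> / 2" "\<lambda>_. 0" 0] by (simp add: V_def)
  thus ?thesis by (simp add: E_def L1_at_z2_zero theta1_def euler_op_def)
qed

lemma hyp_op_Ln_z2_partner:
  fixes P H :: cfun2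
  assumes r: "r > 0" and P: "holo_polydisc r P" and H: "holo_polydisc r H"
    and P_L1: "\<forall>z1\<in>ball 0 r. \<forall>z2\<in>ball 0 r. L1 n a0 a1 a2 P z1 z2 = 0"
    and Pi_L1: "\<forall>z1\<in>ball 0 r. \<forall>z2\<in>ball 0 r. z2 \<notin> \<real>\<^sub>\<le>\<^sub>0 \<longrightarrow>
                  L1 n a0 a1 a2 (\<lambda>w1 w2. P w1 w2 * Ln w2 + H w1 w2) z1 z2 = 0"
    and z: "z \<in> ball 0 r"
  shows "hyp_op a0 a1 a2 (\<lambda>w. H w 0) z = of_nat n * euler_op (\<lambda>w. P w 0) z"
proof -
  have sP: "sep_holomorphic (ball 0 r) (ball 0 r) P" and sH: "sep_holomorphic (ball 0 r) (ball 0 r) H"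
    using P H by (simp_all add: holo_polydisc_iff_sep_holomorphic)
  have "ball (0::complex) r \<noteq> {}" using r by simp
  then obtain c1 d1 M1 where d1: "d1 > 0" "ball c1 d1 \<subseteq> ball 0 r"
    and M1: "\<forall>w\<in>ball c1 d1. \<forall>v\<in>ball 0 (r / 2). norm (P w v) \<le> M1"
    using sep_holomorphic_locally_bounded[OF sP open_ball _ r] by blast
  have "ball c1 d1 \<noteq> {}" using d1(1) by simp
  then obtain c d M2 where d: "d > 0" "ball c d \<subseteq> ball c1 d1"
    and M2: "\<forall>w\<in>ball c d. \<forall>v\<in>ball 0 (r / 2). norm (H w v) \<le> M2"
    using sep_holomorphic_locally_bounded[OF sep_holomorphic_mono[OF sH d1(2) order_refl] open_ball _ r]
    by blast
  define M where "M = max M1 M2"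
  have sub: "ball c d \<subseteq> ball 0 r" "ball 0 (r / 2) \<subseteq> ball (0::complex) r" using d(2) d1(2) r by auto
  have local: "hyp_op a0 a1 a2 (\<lambda>w. H w 0) w = of_nat n * euler_op (\<lambda>w. P w 0) w" if "w \<in> ball c (d / 4)" for w
  proof (rule hyp_op_Ln_z2_partner_local[where P = P and H = H and M = M, OF d(1) half_gt_zero[OF r] _ _ _ _ _ _ that])
    show "sep_holomorphic (ball c d) (ball 0 (r / 2)) P" "sep_holomorphic (ball c d) (ball 0 (r / 2)) H"
      using sep_holomorphic_mono[OF sP sub] sep_holomorphic_mono[OF sH sub] by auto
    fix w v :: complex assume wv: "w \<in> ball c d" "v \<in> ball 0 (r / 2)"
    show "norm (P w v) \<le> M" "norm (H w v) \<le> M"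
      using M1 M2 wv d(2) unfolding M_def by (force intro: le_max_iff_disj[THEN iffD2])+
    show "L1 n a0 a1 a2 P w v = 0" using P_L1 sub wv by blast
    show "L1 n a0 a1 a2 (\<lambda>w1 w2. P w1 w2 * Ln w2 + H w1 w2) w v = 0" if "v \<notin> \<real>\<^sub>\<le>\<^sub>0"
      using Pi_L1 sub wv that by blast
  qed
  have hol: "(\<lambda>w. H w 0) holomorphic_on ball 0 r" "(\<lambda>w. P w 0) holomorphic_on ball 0 r"
    using sP sH r by (auto simp: sep_holomorphic_def)
  show ?thesis
  proof (rule analytic_continuation_open[OF open_ball open_ball _ connected_ball _ _ _ _ z])
    show "ball c (d / 4) \<noteq> {}" using d by simp
    have "ball c (d / 4) \<subseteq> ball c d" using d by (simp add: subset_ball)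
    thus "ball c (d / 4) \<subseteq> ball 0 r" using sub(1) by blast
    show "hyp_op a0 a1 a2 (\<lambda>w. H w 0) holomorphic_on ball 0 r"
      by (rule holomorphic_on_hyp_op[OF hol(1) open_ball])
    show "(\<lambda>w. of_nat n * euler_op (\<lambda>w. P w 0) w) holomorphic_on ball 0 r"
      using holomorphic_on_euler_op[OF hol(2) open_ball] by (intro holomorphic_intros)
  qed (rule local)
qed

section \<open>The mirror map\<close>

lemma Ln_exp_mult:
  assumes E: "\<bar>Im E\<bar> < pi / 2" and w: "Re w > 0"
  shows "Ln (exp E * w) = E + Ln w"
proof -
  have LnE: "Ln (exp E) = E" using E by (intro Ln_exp) auto
  have "\<bar>Im (Ln w)\<bar> < pi / 2" using w by (rule Re_Ln_pos_lt_imp)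
  moreover have "w \<noteq> 0" using w by auto
  ultimately have "Ln (exp E * w) = Ln (exp E) + Ln w"
    using E by (intro Ln_times_simple) (auto simp: LnE)
  thus ?thesis by (simp add: LnE)
qed

lemma eventually_Ln_mirror_form:
  fixes F G :: "complex \<Rightarrow> complex"
  assumes F: "(F \<longlongrightarrow> 1) (at 0)" and G: "(G \<longlongrightarrow> 0) (at 0)"
  shows "\<forall>\<^sub>F z in at 0. c * (F z * Ln (1 - a0 * z) + G z)
           = c * F z * Ln ((z * exp (G z / F z)) * (1 - a0 * z) / z)"
proof -
  have "((\<lambda>z. G z / F z) \<longlongrightarrow> 0) (at 0)" using tendsto_divide[OF G F] by simp
  hence "eventually (\<lambda>z. norm (G z / F z) < pi / 2) (at 0)"
    by (rule order_tendstoD(2)[OF tendsto_norm_zero]) simp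
  moreover have "eventually (\<lambda>z. F z \<noteq> 0) (at 0)"
    using tendsto_imp_eventually_ne[OF F] by simp
  moreover have "((\<lambda>z. Re (1 - a0 * z)) \<longlongrightarrow> 1) (at 0)"
    by (rule tendsto_eq_intros refl | simp)+
  hence "eventually (\<lambda>z. Re (1 - a0 * z) > 0) (at 0)"
    by (rule order_tendstoD(1)) simp
  moreover have "eventually (\<lambda>z. z \<noteq> 0) (at (0::complex))"
    by (simp add: eventually_at_filter)
  ultimately show ?thesis
  proof eventually_elim
    case (elim z)
    define E where "E = G z / F z"
    have "\<bar>Im E\<bar> < pi / 2" using elim(1) abs_Im_le_cmod[of E] by (simp add: E_def)
    hence "Ln ((z * exp E) * (1 - a0 * z) / z) = E + Ln (1 - a0 * z)"
      using elim Ln_exp_mult[of E "1 - a0 * z"] by (simp add: mult.commute)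
    moreover have "G z = F z * E" using elim(2) by (simp add: E_def)
    ultimately show ?case unfolding E_def[symmetric] by (simp add: algebra_simps)
  qed
qed

lemma hyp_op_system_solution:
  fixes f g h :: "complex \<Rightarrow> complex"
  assumes a0: "a0 \<noteq> 0" and a12: "a1 + a2 = 1"
    and anpi: "\<forall>l::nat. a1 + of_nat l \<noteq> 0 \<and> a2 + of_nat l \<noteq> 0" and r: "r > 0"
    and f: "f holomorphic_on ball 0 r" and g: "g holomorphic_on ball 0 r" and h: "h holomorphic_on ball 0 r"
    and f0: "f 0 = 1" and g0: "g 0 = 0" and h0: "h 0 = 0"
    and eqf: "\<And>z. z \<in> ball 0 r \<Longrightarrow> hyp_op a0 a1 a2 f z = 0"
    and eqg: "\<And>z. z \<in> ball 0 r \<Longrightarrow>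
      hyp_op a0 a1 a2 g z = - 2 * euler_op f z + a0 * z * (2 * euler_op f z + (a1 + a2) * f z)"
    and eqh: "\<And>z. z \<in> ball 0 r \<Longrightarrow> hyp_op a0 a1 a2 h z = of_nat n * euler_op f z"
  shows "(\<forall>z\<in>ball 0 r. norm (a0 * z) < 1 \<longrightarrow>
        g z = hypGt a0 a1 a2 z \<and>
        h z = - (of_nat n / 2) * (hypF a0 a1 a2 z * Ln (1 - a0 * z) + hypGt a0 a1 a2 z))
     \<and> (\<forall>\<^sub>F z in at 0.
        h z = - (of_nat n / 2) * hypF a0 a1 a2 z *
          Ln ((z * exp (hypGt a0 a1 a2 z / hypF a0 a1 a2 z)) * (1 - a0 * z) / z))"
proof -
  define R where "R = min r (1 / norm a0)"
  have R: "R > 0" "ball 0 R \<subseteq> ball 0 r" using r a0 by (auto simp: R_def)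
  have ball_R: "z \<in> ball 0 R \<longleftrightarrow> z \<in> ball 0 r \<and> norm (a0 * z) < 1" for z
    using a0 by (auto simp: R_def norm_mult field_simps)
  have F: "f z = hypF a0 a1 a2 z" and G: "g z = hypGt a0 a1 a2 z" if "z \<in> ball 0 r" for z
    using hyp_op_eq_0_imp_eq_hypF[OF f r eqf f0 that]
      hyp_op_eq_imp_eq_hypGt[OF f r eqf f0 g g0 eqg anpi that] by auto
  have H: "h z = - (of_nat n / 2) * (hypF a0 a1 a2 z * Ln (1 - a0 * z) + hypGt a0 a1 a2 z)"
    if "z \<in> ball 0 R" for z
    using hyp_op_eq_euler_op_imp_eq_Ln_one_minus[OF a12 R(1) _ holomorphic_on_subset[OF f R(2)]
        holomorphic_on_subset[OF g R(2)] holomorphic_on_subset[OF h R(2)] _ _ _ g0 h0 that]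
      ball_R that eqf eqg eqh F G by auto
  have "(f \<longlongrightarrow> 1) (at 0)" "(g \<longlongrightarrow> 0) (at 0)"
    using f g r f0 g0 by (metis holomorphic_on_imp_continuous_on continuous_on_interior interior_ball
        centre_in_ball continuous_at isCont_def)+
  hence "(hypF a0 a1 a2 \<longlongrightarrow> 1) (at 0)" "(hypGt a0 a1 a2 \<longlongrightarrow> 0) (at 0)"
    using F G r by (auto intro: Lim_transform_within_open[of _ _ _ _ "ball 0 r"])
  hence "\<forall>\<^sub>F z in at 0. - (of_nat n / 2) * (hypF a0 a1 a2 z * Ln (1 - a0 * z) + hypGt a0 a1 a2 z)
      = - (of_nat n / 2) * hypF a0 a1 a2 z * Ln ((z * exp (hypGt a0 a1 a2 z / hypF a0 a1 a2 z)) * (1 - a0 * z) / z)"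
    by (rule eventually_Ln_mirror_form)
  moreover have "eventually (\<lambda>z. z \<in> ball 0 R) (at 0)"
    using R(1) by (intro eventually_at_in_open') auto
  ultimately have "\<forall>\<^sub>F z in at 0. h z = - (of_nat n / 2) * hypF a0 a1 a2 z *
          Ln ((z * exp (hypGt a0 a1 a2 z / hypF a0 a1 a2 z)) * (1 - a0 * z) / z)"
    by eventually_elim (simp add: H)
  thus ?thesis using F G H ball_R by auto
qed

theorem mainTheorem7:
  fixes n :: nat and a0 a1 a2 :: complex and r :: real
    and P0 H1 H2 :: "complex \<Rightarrow> complex \<Rightarrow> complex"
  assumes n: "n \<ge> 1"
    and a0: "a0 \<noteq> 0"
    and a12: "a1 + a2 = 1"
    and anpi: "\<forall>l::nat. a1 + of_nat l \<noteq> 0 \<and> a2 + of_nat l \<noteq> 0"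
    and r: "r > 0"
    and P0_holo: "holo_polydisc r P0"
    and P0_0: "P0 0 0 = 1"
    and P0_L1: "\<forall>z1\<in>ball 0 r. \<forall>z2\<in>ball 0 r. L1 n a0 a1 a2 P0 z1 z2 = 0"
    and P0_L2: "\<forall>z1\<in>ball 0 r. \<forall>z2\<in>ball 0 r. L2 n P0 z1 z2 = 0"
    and H1_holo: "holo_polydisc r H1"
    and H1_0: "H1 0 0 = 0"
    and P1_L1: "\<forall>z1\<in>ball 0 r. \<forall>z2\<in>ball 0 r. z1 \<notin> \<real>\<^sub>\<le>\<^sub>0 \<longrightarrow>
                  L1 n a0 a1 a2 (\<lambda>w1 w2. P0 w1 w2 * Ln w1 + H1 w1 w2) z1 z2 = 0"
    and P1_L2: "\<forall>z1\<in>ball 0 r. \<forall>z2\<in>ball 0 r. z1 \<notin> \<real>\<^sub>\<le>\<^sub>0 \<longrightarrow>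
                  L2 n (\<lambda>w1 w2. P0 w1 w2 * Ln w1 + H1 w1 w2) z1 z2 = 0"
    and H2_holo: "holo_polydisc r H2"
    and H2_0: "H2 0 0 = 0"
    and P2_L1: "\<forall>z1\<in>ball 0 r. \<forall>z2\<in>ball 0 r. z2 \<notin> \<real>\<^sub>\<le>\<^sub>0 \<longrightarrow>
                  L1 n a0 a1 a2 (\<lambda>w1 w2. P0 w1 w2 * Ln w2 + H2 w1 w2) z1 z2 = 0"
    and P2_L2: "\<forall>z1\<in>ball 0 r. \<forall>z2\<in>ball 0 r. z2 \<notin> \<real>\<^sub>\<le>\<^sub>0 \<longrightarrow>
                  L2 n (\<lambda>w1 w2. P0 w1 w2 * Ln w2 + H2 w1 w2) z1 z2 = 0"
  shows
    "(\<forall>z\<in>ball 0 r. norm (a0 * z) < 1 \<longrightarrow>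
        H1 z 0 = hypGt a0 a1 a2 z \<and>
        H2 z 0 = - (of_nat n / 2) * (hypF a0 a1 a2 z * Ln (1 - a0 * z) + hypGt a0 a1 a2 z))
     \<and> (\<forall>\<^sub>F z in at 0.
        H2 z 0 = - (of_nat n / 2) * hypF a0 a1 a2 z *
          Ln ((z * exp (hypGt a0 a1 a2 z / hypF a0 a1 a2 z)) * (1 - a0 * z) / z))"
proof -
  have r0: "0 \<in> ball (0::complex) r" using r by simp
  have hol: "(\<lambda>w. P0 w 0) holomorphic_on ball 0 r" "(\<lambda>w. H1 w 0) holomorphic_on ball 0 r"
    "(\<lambda>w. H2 w 0) holomorphic_on ball 0 r"
    using P0_holo H1_holo H2_holo r0 by (auto simp: holo_polydisc_def)
  have eqf: "hyp_op a0 a1 a2 (\<lambda>w. P0 w 0) z = 0" if "z \<in> ball 0 r" for z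
    using P0_L1 that r0 L1_at_z2_zero[of n a0 a1 a2 P0 z] by simp
  have eqg: "hyp_op a0 a1 a2 (\<lambda>w. H1 w 0) z = - 2 * euler_op (\<lambda>w. P0 w 0) z
      + a0 * z * (2 * euler_op (\<lambda>w. P0 w 0) z + (a1 + a2) * P0 z 0)" if "z \<in> ball 0 r" for z
  proof (rule hyp_op_Ln_partner[OF hol(1,2) eqf _ that])
    fix w :: complex assume "w \<in> ball 0 r" "w \<notin> \<real>\<^sub>\<le>\<^sub>0"
    thus "hyp_op a0 a1 a2 (\<lambda>w. P0 w 0 * Ln w + H1 w 0) w = 0"
      using P1_L1 r0 L1_at_z2_zero[of n a0 a1 a2 "\<lambda>w1 w2. P0 w1 w2 * Ln w1 + H1 w1 w2" w] by simp
  qed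
  have eqh: "hyp_op a0 a1 a2 (\<lambda>w. H2 w 0) z = of_nat n * euler_op (\<lambda>w. P0 w 0) z"
    if "z \<in> ball 0 r" for z
    by (rule hyp_op_Ln_z2_partner[OF r P0_holo H2_holo P0_L1 P2_L1 that])
  show ?thesis
    using hyp_op_system_solution[where f = "\<lambda>w. P0 w 0" and g = "\<lambda>w. H1 w 0" and h = "\<lambda>w. H2 w 0",
        OF a0 a12 anpi r hol P0_0 H1_0 H2_0 eqf eqg eqh]
    by simp
qed

end
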